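(* For $n\ge 0$ let $s_n=\sum_{r=0}^{n}1/r!$ be the $n$th partial sum of the Taylor series $e=\sum_{r\ge 0}1/r!$. For every $n\ge 0$, at most two of the three numbers $s_n, s_{n+1}, s_{n+2}$ are convergents of the simple continued fraction expansion of $e$.
   Context: The convergents of $e$ are the rationals obtained by truncating the simple continued fraction expansion of $e$; a partial sum $s_n$ "is a convergent" if it equals one of these rationals. *)

theory Defs
  imports Complex_Main
begin

fun cf_rem :: "real \<Rightarrow> nat \<Rightarrow> real" where
  "cf_rem x 0 = x"
| "cf_rem x (Suc k) = 1 / (cf_rem x k - of_int \<lfloor>cf_rem x k\<rfloor>)"

definition cf_digit :: "real \<Rightarrow> nat \<Rightarrow> int" where
  "cf_digit x k = \<lfloor>cf_rem x k\<rfloor>"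

fun cf_eval :: "int list \<Rightarrow> real" where
  "cf_eval [] = 0"
| "cf_eval [a] = of_int a"
| "cf_eval (a # b # rest) = of_int a + 1 / cf_eval (b # rest)"

definition convergent :: "real \<Rightarrow> nat \<Rightarrow> real" where
  "convergent x n = cf_eval (map (cf_digit x) [0..<Suc n])"

definition is_convergent_of :: "real \<Rightarrow> real \<Rightarrow> bool" where
  "is_convergent_of x q \<longleftrightarrow> (\<exists>n. q = convergent x n)"

definition e_partial :: "nat \<Rightarrow> real" where
  "e_partial n = (\<Sum>r=0..n. 1 / fact r)"

end

theory Submission
  imports Defs
begin

text \<open>Write g_m = gcd(m! s_m, m!), so that m!/g_m is the reduced denominator of s_m. If s_m
  is a convergent p/q of e, then 1/(m+1)! < e - s_m < 1/q^2 and m!/g_m \<le> q, hence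
  (m!)^2 < g_m^2 (m+1)!. The numerators m! s_m of consecutive partial sums are coprime, and a
  common divisor of those two steps apart divides n+3, so g_n g_(n+1) g_(n+2) \<le> (n+2)! (n+3).
  Multiplying the three inequalities gives n! < (n+1)(n+2)^2(n+3)^3, which fails for n \<ge> 10. For n < 10 one of the
  three indices is an even m \<le> 10: for m \<noteq> 2 the inequality fails numerically, and
  s_2 = 5/2 is not a convergent since e = [2; 1, 2, ...].\<close>

section \<open>Convergents of irrational numbers\<close>

lemma cf_rem_Suc_shift: "cf_rem x (Suc k) = cf_rem (cf_rem x 1) k"
  by (induction k) auto

lemma cf_digit_Suc_shift: "cf_digit x (Suc k) = cf_digit (cf_rem x 1) k"
  unfolding cf_digit_def by (simp only: cf_rem_Suc_shift)

lemma convergent_0: "convergent x 0 = of_int (cf_digit x 0)"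
  by (simp add: convergent_def)

lemma convergent_Suc:
  "convergent x (Suc n) = of_int (cf_digit x 0) + 1 / convergent (cf_rem x 1) n"
proof -
  have "map (cf_digit x) [0..<Suc (Suc n)] = cf_digit x 0 # map (cf_digit (cf_rem x 1)) [0..<Suc n]"
    by (simp add: upt_conv_Cons map_Suc_upt[symmetric] comp_def cf_digit_Suc_shift del: upt_Suc)
  then show ?thesis
    by (simp add: convergent_def upt_conv_Cons del: upt_Suc)
qed

lemma floor_add_inverse_cf_rem_1: "of_int \<lfloor>x\<rfloor> + 1 / cf_rem x 1 = x"
  by simp

lemma cf_rem_1_notin_Rats: "x \<notin> \<rat> \<Longrightarrow> cf_rem x 1 \<notin> \<rat>"
  by (metis Rats_add Rats_divide Rats_1 Rats_of_int floor_add_inverse_cf_rem_1)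

lemma cf_rem_1_gt_1:
  assumes "x \<notin> \<rat>"
  shows "cf_rem x 1 > 1"
proof -
  have "x \<notin> \<int>"
    using assms Ints_subset_Rats by blast
  then have "0 < frac x" "frac x < 1"
    by (simp_all add: frac_lt_1)
  then show ?thesis
    by (simp add: frac_def)
qed

lemma cf_rem_notin_Rats: "x \<notin> \<rat> \<Longrightarrow> cf_rem x k \<notin> \<rat>"
proof (induction k)
  case (Suc k)
  then show ?case
    using cf_rem_1_notin_Rats[of "cf_rem x k"] by simp
qed simp

lemma cf_rem_Suc_gt_1: "x \<notin> \<rat> \<Longrightarrow> cf_rem x (Suc k) > 1"
  using cf_rem_1_gt_1[OF cf_rem_notin_Rats, of x k] by simp

lemma cf_digit_0_le_convergent:
  assumes "x \<notin> \<rat>"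
  shows "of_int (cf_digit x 0) \<le> convergent x n"
  using assms
proof (induction n arbitrary: x)
  case 0
  then show ?case by (simp add: convergent_0)
next
  case (Suc n)
  define y where "y = cf_rem x 1"
  have "1 \<le> real_of_int (cf_digit y 0)"
    using cf_rem_1_gt_1[OF Suc.prems] unfolding y_def[symmetric] cf_digit_def by simp
  also have "\<dots> \<le> convergent y n"
    using Suc.IH cf_rem_1_notin_Rats[OF Suc.prems] unfolding y_def by blast
  finally show ?case
    by (simp add: convergent_Suc y_def)
qed

text \<open>p/q and p'/q' are the n-th and (n-1)-st convergents (the (-1)-st being 1/0), and x is their
  Moebius combination with the complete quotient cf_rem x (n+1).\<close>

lemma convergent_continuant_form:
  assumes "x \<notin> \<rat>" "x > 1"
  shows "\<exists>(p::int) (q::int) (p'::int) (q'::int).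
    p \<ge> 1 \<and> q \<ge> 1 \<and> p' \<ge> 0 \<and> q' \<ge> 0 \<and> \<bar>p * q' - p' * q\<bar> = 1 \<and>
    convergent x n = real_of_int p / real_of_int q \<and>
    x = (p * cf_rem x (Suc n) + p') / (q * cf_rem x (Suc n) + q')"
  using assms
proof (induction n arbitrary: x)
  case 0
  define y where "y = cf_rem x 1"
  have "x = (\<lfloor>x\<rfloor> * y + 1) / (1 * y + 0)"
    using cf_rem_1_gt_1[OF "0.prems"(1)] floor_add_inverse_cf_rem_1[of x]
    unfolding y_def[symmetric] by (simp add: field_simps)
  moreover have "\<lfloor>x\<rfloor> \<ge> 1"
    using "0.prems"(2) by linarith
  ultimately show ?case
    by (intro exI[of _ "\<lfloor>x\<rfloor>"] exI[of _ 1] exI[of _ 1] exI[of _ 0])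
      (simp add: convergent_0 cf_digit_def y_def)
next
  case (Suc n)
  define a where "a = \<lfloor>x\<rfloor>"
  define y where "y = cf_rem x 1"
  define b where "b = cf_rem x (Suc (Suc n))"
  have a: "a \<ge> 1"
    using Suc.prems(2) unfolding a_def by linarith
  have "y \<notin> \<rat>" "y > 1"
    unfolding y_def using cf_rem_1_notin_Rats cf_rem_1_gt_1 Suc.prems(1) by blast+
  then obtain p q p' q' :: int where pq: "p \<ge> 1" "q \<ge> 1" "p' \<ge> 0" "q' \<ge> 0"
      "\<bar>p * q' - p' * q\<bar> = 1" "convergent y n = p / q"
      "y = (p * b + p') / (q * b + q')"
    using Suc.IH unfolding b_def y_def cf_rem_Suc_shift[of x "Suc n"] by blast
  have "b > 1"
    unfolding b_def using cf_rem_Suc_gt_1[OF Suc.prems(1)] .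
  then have "p * b + p' > 0"
    using pq(1,3) by (auto intro!: add_pos_nonneg)
  then have "x = a + (q * b + q') / (p * b + p')"
    using floor_add_inverse_cf_rem_1[of x] pq(7) unfolding a_def[symmetric] y_def[symmetric]
    by simp
  also have "\<dots> = ((a * p + q) * b + (a * p' + q')) / (p * b + p')"
    using \<open>p * b + p' > 0\<close> by (simp add: field_simps)
  finally have "x = ((a * p + q) * b + (a * p' + q')) / (p * b + p')" .
  moreover have "convergent x (Suc n) = (a * p + q) / p"
    using pq(1,6) by (simp add: convergent_Suc cf_digit_def a_def y_def field_simps)
  moreover have "\<bar>(a * p + q) * p' - (a * p' + q') * p\<bar> = 1"
    using pq(5) by (simp add: algebra_simps abs_minus_commute)
  moreover have "a * p + q \<ge> 1" "a * p' + q' \<ge> 0"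
    using a pq(1-4) by (simp_all add: add_increasing)
  ultimately show ?case
    using pq(1,3) unfolding b_def[symmetric]
    by (intro exI[of _ "a * p + q"] exI[of _ p] exI[of _ "a * p' + q'"] exI[of _ p']) blast
qed

lemma convergent_approximation:
  assumes "x \<notin> \<rat>" "x > 1"
  obtains p q :: int where "q \<ge> 1" "convergent x n = p / q" "\<bar>x - p / q\<bar> < 1 / q\<^sup>2"
proof -
  obtain p q p' q' :: int
    where pq: "p \<ge> 1" "q \<ge> 1" "p' \<ge> 0" "q' \<ge> 0" "\<bar>p * q' - p' * q\<bar> = 1"
      "convergent x n = p / q" "x = (p * cf_rem x (Suc n) + p') / (q * cf_rem x (Suc n) + q')"
    using convergent_continuant_form[OF assms] by blast
  define b where "b = cf_rem x (Suc n)"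
  have "b > 1"
    unfolding b_def using cf_rem_Suc_gt_1[OF assms(1)] .
  then have "q < q * b"
    using pq(2) by simp
  then have den: "q * b + q' > q"
    using pq(4) by linarith
  have "x - p / q = of_int (p' * q - p * q') / (q * (q * b + q'))"
    using den pq(2) unfolding pq(7)[folded b_def] by (simp add: field_simps)
  also have "\<bar>\<dots>\<bar> = 1 / (q * (q * b + q'))"
  proof -
    have "\<bar>p' * q - p * q'\<bar> = 1"
      using pq(5) abs_minus_commute by metis
    then have "\<bar>real_of_int (p' * q - p * q')\<bar> = 1"
      by (simp only: of_int_abs[symmetric] of_int_1)
    then show ?thesis
      using den pq(2) by (simp add: abs_divide abs_mult)
  qed
  also have "\<dots> < 1 / q\<^sup>2"
    using den pq(2) by (intro divide_strict_left_mono) (auto simp: power2_eq_square)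
  finally show ?thesis
    using that pq(2,6) by blast
qed

section \<open>Partial sums of the exponential series\<close>

fun e_partial_num :: "nat \<Rightarrow> nat" where
  "e_partial_num 0 = 1"
| "e_partial_num (Suc m) = Suc m * e_partial_num m + 1"

lemma e_partial_Suc: "e_partial (Suc m) = e_partial m + 1 / fact (Suc m)"
  by (simp add: e_partial_def)

lemma fact_mult_e_partial: "fact m * e_partial m = e_partial_num m"
proof (induction m)
  case 0
  then show ?case by (simp add: e_partial_def)
next
  case (Suc m)
  have "fact (Suc m) * e_partial (Suc m) = Suc m * (fact m * e_partial m) + 1"
    by (simp add: e_partial_Suc distrib_left del: fact_Suc) simp
  then show ?case
    using Suc.IH by (simp add: algebra_simps)
qed

lemma sums_inverse_fact: "(\<lambda>r. 1 / fact r) sums (exp 1 :: real)"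
  using exp_converges[of "1::real"] by (simp add: divide_inverse)

lemma summable_e_tail: "summable (\<lambda>j. 1 / fact (j + Suc m) :: real)"
  by (rule summable_ignore_initial_segment[OF sums_summable[OF sums_inverse_fact]])

lemma exp_1_minus_e_partial: "exp 1 - e_partial m = (\<Sum>j. 1 / fact (j + Suc m))"
proof -
  have "e_partial m = (\<Sum>r<Suc m. 1 / fact r)"
    by (simp add: e_partial_def atLeast0AtMost lessThan_Suc_atMost)
  then show ?thesis
    using suminf_split_initial_segment[OF sums_summable[OF sums_inverse_fact], of "Suc m"]
      sums_unique[OF sums_inverse_fact] by simp
qed

lemma e_tail_gt: "1 / fact (Suc m) < exp 1 - e_partial m"
proof -
  have "1 / fact (Suc m) < (\<Sum>j<2. 1 / fact (j + Suc m) :: real)"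
    by (simp add: numeral_2_eq_2)
  also have "\<dots> < (\<Sum>j. 1 / fact (j + Suc m))"
    by (rule sum_less_suminf[OF summable_e_tail]) simp
  finally show ?thesis
    by (simp add: exp_1_minus_e_partial)
qed

lemma fact_mult_power_le_fact: "fact (Suc m) * (m + 2) ^ j \<le> (fact (j + Suc m) :: nat)"
proof (induction j)
  case (Suc j)
  have "fact (Suc m) * (m + 2) ^ Suc j = (m + 2) * (fact (Suc m) * (m + 2) ^ j)"
    by (metis mult.left_commute power_Suc)
  also have "\<dots> \<le> (Suc j + Suc m) * fact (j + Suc m)"
    using Suc.IH by (intro mult_mono) auto
  finally show ?case
    by simp
qed simp

text \<open>The tail is dominated by a geometric series of ratio 1/(m+2).\<close>

lemma e_tail_le: "exp 1 - e_partial m \<le> (real m + 2) / (fact (Suc m) * (real m + 1))"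
proof -
  define r :: real where "r = 1 / (m + 2)"
  have "norm r < 1"
    by (simp add: r_def)
  then have geom: "(\<lambda>j. 1 / fact (Suc m) * r ^ j) sums (1 / fact (Suc m) * (1 / (1 - r)))"
    by (intro sums_mult geometric_sums)
  have "1 / fact (j + Suc m) \<le> 1 / fact (Suc m) * r ^ j" for j
  proof -
    have "real (fact (Suc m) * (m + 2) ^ j) \<le> real (fact (j + Suc m))"
      by (simp only: of_nat_le_iff fact_mult_power_le_fact)
    then have "fact (Suc m) * (real m + 2) ^ j \<le> (fact (j + Suc m) :: real)"
      by (simp only: of_nat_mult of_nat_power of_nat_fact of_nat_add of_nat_numeral)
    then have "1 / fact (j + Suc m) \<le> 1 / (fact (Suc m) * (real m + 2) ^ j)"
      by (intro divide_left_mono mult_pos_pos) auto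
    also have "\<dots> = 1 / fact (Suc m) * r ^ j"
      by (simp add: r_def power_divide add.commute)
    finally show ?thesis .
  qed
  then have "exp 1 - e_partial m \<le> 1 / fact (Suc m) * (1 / (1 - r))"
    unfolding exp_1_minus_e_partial
    using suminf_le[OF _ summable_e_tail sums_summable[OF geom]] sums_unique[OF geom] by simp
  also have "\<dots> = (real m + 2) / (fact (Suc m) * (real m + 1))"
    by (simp add: r_def field_simps del: fact_Suc)
  finally show ?thesis .
qed

lemma fact_mult_e_tail_gt_0: "0 < fact m * (exp 1 - e_partial m)"
proof -
  have "0 < exp 1 - e_partial m"
    by (rule less_trans[OF _ e_tail_gt]) simp
  then show ?thesis
    by simp
qed

lemma fact_mult_e_tail_lt_1:
  assumes "m \<ge> 1"
  shows "fact m * (exp 1 - e_partial m) < 1"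
proof -
  have "fact m * (exp 1 - e_partial m) \<le> fact m * ((real m + 2) / (fact (Suc m) * (real m + 1)))"
    by (rule mult_left_mono[OF e_tail_le]) simp
  also have "\<dots> = (real m + 2) / (real m + 1)\<^sup>2"
    by (simp add: power2_eq_square add.commute)
  also have "\<dots> < 1"
  proof -
    have "1 \<le> real m"
      using assms by simp
    moreover from this have "1 * 1 \<le> real m * real m"
      by (intro mult_mono) auto
    ultimately have "real m + 2 < (real m + 1)\<^sup>2"
      by (simp add: power2_eq_square algebra_simps)
    then show ?thesis
      by simp
  qed
  finally show ?thesis .
qed

lemma exp_1_notin_Rats: "(exp 1 :: real) \<notin> \<rat>"
proof
  assume "(exp 1 :: real) \<in> \<rat>"
  then obtain a c :: int where "c > 0" "exp 1 = a / c"
    by (rule Rats_cases') auto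
  moreover define b where "b = nat c"
  ultimately have b: "b > 0" "exp 1 = a / b"
    by simp_all
  have "fact b * exp 1 = fact (b - 1) * (real b * exp 1 :: real)"
    using b(1) by (simp add: fact_reduce[of b] ac_simps)
  also have "\<dots> = of_int (a * fact (b - 1))"
    using b by simp
  finally have fact_mult_exp_1: "fact b * exp 1 = real_of_int (a * fact (b - 1))" .
  define k where "k = a * fact (b - 1) - e_partial_num b"
  have "fact b * (exp 1 - e_partial b) = of_int k"
    using fact_mult_exp_1 by (simp add: k_def right_diff_distrib fact_mult_e_partial)
  then have "0 < k" "k < 1"
    using b(1) fact_mult_e_tail_gt_0[of b] fact_mult_e_tail_lt_1[of b] by simp_all
  then show False
    by simp
qed

lemma exp_1_bounds: "8 / 3 < (exp 1 :: real)" "exp 1 < (11 / 4 :: real)"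
proof -
  have "fact 3 * e_partial 3 = 16"
    unfolding fact_mult_e_partial by (simp add: numeral_eq_Suc)
  then have s3: "e_partial 3 = 8 / 3"
    by (simp add: fact_numeral)
  show "8 / 3 < (exp 1 :: real)"
    using e_tail_gt[of 3] s3 by (simp add: fact_numeral)
  show "exp 1 < (11 / 4 :: real)"
    using e_tail_le[of 3] s3 by (simp add: fact_numeral)
qed

section \<open>Reduced denominators of convergent partial sums\<close>

definition e_partial_gcd :: "nat \<Rightarrow> nat" where
  "e_partial_gcd m = gcd (e_partial_num m) (fact m)"

lemma denominator_div_gcd_le:
  fixes N F :: nat and p q :: int
  assumes "q > 0" "int N * q = p * int F"
  shows "int (F div gcd N F) \<le> q"
proof (cases "gcd N F = 0")
  case True
  then show ?thesis
    using assms(1) by simp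
next
  case False
  define g where "g = gcd N F"
  have N: "N = N div g * g" and F: "F = F div g * g"
    by (simp_all add: g_def)
  have "coprime (F div g) (N div g)"
    using False div_gcd_coprime[of N F] unfolding g_def by (simp add: coprime_commute)
  moreover have "int (N div g) * q = p * int (F div g)"
    using assms(2) False unfolding g_def[symmetric]
    by (subst (asm) N, subst (asm) F) (simp add: ac_simps)
  then have "int (F div g) dvd int (N div g) * q"
    by (simp add: dvd_def ac_simps)
  ultimately have "int (F div g) dvd q"
    by (simp add: coprime_dvd_mult_right_iff)
  then show ?thesis
    unfolding g_def using assms(1) by (simp add: zdvd_imp_le)
qed

lemma e_partial_convergent_denominator:
  assumes "is_convergent_of (exp 1) (e_partial m)"
  obtains p q :: int where "q \<ge> 1" "e_partial m = p / q" "q\<^sup>2 < fact (Suc m)"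
proof -
  obtain k where k: "e_partial m = convergent (exp 1) k"
    using assms unfolding is_convergent_of_def by blast
  have "(1::real) < exp 1"
    by simp
  then obtain p q :: int where q: "q \<ge> 1" and "convergent (exp 1) k = p / q" and
      approx: "\<bar>exp 1 - p / q\<bar> < 1 / q\<^sup>2"
    using convergent_approximation[OF exp_1_notin_Rats] by blast
  then have pq: "e_partial m = p / q"
    using k by simp
  have "1 / fact (Suc m) < exp 1 - e_partial m"
    by (rule e_tail_gt)
  also have "\<dots> < 1 / q\<^sup>2"
    using approx pq by simp
  finally have "real_of_int (q\<^sup>2) < real_of_int (fact (Suc m))"
    using q by (simp add: field_simps del: fact_Suc)
  then have "q\<^sup>2 < fact (Suc m)"
    by (simp only: of_int_less_iff)
  with q pq that show ?thesis
    by blast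
qed

text \<open>The denominator q of s_m as a convergent is at least its reduced denominator m!/gcd.\<close>

lemma e_partial_convergent_imp_fact_sq_less:
  assumes "is_convergent_of (exp 1) (e_partial m)"
  shows "(fact m)\<^sup>2 < (e_partial_gcd m)\<^sup>2 * fact (Suc m)"
proof -
  obtain p q :: int where q: "q \<ge> 1" and pq: "e_partial m = p / q" and q2: "q\<^sup>2 < fact (Suc m)"
    using e_partial_convergent_denominator[OF assms] .
  have "real_of_int (int (e_partial_num m) * q) = real_of_int (p * int (fact m))"
    using fact_mult_e_partial[of m] pq q by (simp add: field_simps)
  then have "int (e_partial_num m) * q = p * int (fact m)"
    by (simp only: of_int_eq_iff)
  define g where "g = e_partial_gcd m"
  define D where "D = fact m div g"
  have "int D \<le> q"
    unfolding D_def g_def e_partial_gcd_def using q \<open>_ * q = _\<close>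
    by (intro denominator_div_gcd_le) auto
  have "fact m = D * g"
    by (simp add: D_def g_def e_partial_gcd_def)
  then have "int ((fact m)\<^sup>2) = (int D)\<^sup>2 * (int g)\<^sup>2"
    by (simp add: power_mult_distrib)
  also have "\<dots> \<le> q\<^sup>2 * (int g)\<^sup>2"
    using \<open>int D \<le> q\<close> by (intro mult_right_mono power_mono) auto
  also have "\<dots> < fact (Suc m) * (int g)\<^sup>2"
    using q2 by (intro mult_strict_right_mono) (auto simp: g_def e_partial_gcd_def)
  finally have "int ((fact m)\<^sup>2) < int (g\<^sup>2 * fact (Suc m))"
    by (simp add: mult.commute del: fact_Suc)
  then show ?thesis
    unfolding g_def by (simp only: of_nat_less_iff)
qed

section \<open>Three consecutive partial sums\<close>

lemma coprime_e_partial_num_Suc: "coprime (e_partial_num m) (e_partial_num (Suc m))"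
proof (rule coprimeI)
  fix d
  assume "d dvd e_partial_num m" "d dvd e_partial_num (Suc m)"
  then have "d dvd Suc m * e_partial_num m + 1" "d dvd Suc m * e_partial_num m"
    by (simp_all only: e_partial_num.simps dvd_mult)
  then show "is_unit d"
    by (simp only: dvd_add_right_iff)
qed

lemma common_dvd_e_partial_num_Suc_Suc:
  assumes "d dvd e_partial_num m" "d dvd e_partial_num (Suc (Suc m))"
  shows "d dvd m + 3"
proof -
  have "e_partial_num (Suc (Suc m)) = (m + 2) * (m + 1) * e_partial_num m + (m + 3)"
    by (simp add: algebra_simps)
  moreover have "d dvd (m + 2) * (m + 1) * e_partial_num m"
    using assms(1) by (rule dvd_mult)
  ultimately show ?thesis
    using assms(2) by (simp only: dvd_add_right_iff)
qed

text \<open>The three gcds divide (n+2)!, the middle one is coprime to the other two, and the outer two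
  share at most a factor n+3.\<close>

lemma e_partial_gcd_prod_le:
  "e_partial_gcd n * e_partial_gcd (Suc n) * e_partial_gcd (Suc (Suc n))
    \<le> fact (Suc (Suc n)) * (n + 3)"
proof -
  define a b c
    where "a = e_partial_gcd n" "b = e_partial_gcd (Suc n)" "c = e_partial_gcd (Suc (Suc n))"
  define F :: nat where "F = fact (Suc (Suc n))"
  have "a dvd F" "b dvd F" "c dvd F"
    unfolding a_b_c_def F_def e_partial_gcd_def
    by (rule dvd_trans[OF gcd_dvd2 fact_dvd], simp)+
  have "coprime b a"
    unfolding a_b_c_def e_partial_gcd_def
    by (rule coprime_divisors[OF gcd_dvd1 gcd_dvd1])
      (rule coprime_commute[THEN iffD1, OF coprime_e_partial_num_Suc])
  have "coprime b c"
    unfolding a_b_c_def e_partial_gcd_def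
    by (rule coprime_divisors[OF gcd_dvd1 gcd_dvd1]) (rule coprime_e_partial_num_Suc)
  have "gcd a c dvd n + 3"
    unfolding a_b_c_def e_partial_gcd_def
    by (rule common_dvd_e_partial_num_Suc_Suc) (meson dvd_trans gcd_dvd1 gcd_dvd2)+
  then have "gcd a c \<le> n + 3"
    by (rule dvd_imp_le) simp
  have "coprime b (a * c)"
    using \<open>coprime b a\<close> \<open>coprime b c\<close> by simp
  then have "coprime b (lcm a c)"
    by (rule coprime_divisors[OF dvd_refl lcm_least[OF dvd_triv_left dvd_triv_right]])
  moreover have "lcm a c dvd F"
    using \<open>a dvd F\<close> \<open>c dvd F\<close> by (rule lcm_least)
  ultimately have "b * lcm a c dvd F"
    using \<open>b dvd F\<close> by (simp add: divides_mult)
  then have "b * lcm a c \<le> F"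
    by (rule dvd_imp_le) (simp add: F_def)
  have "a * b * c = b * (a * c)"
    by (simp only: ac_simps)
  also have "\<dots> = b * lcm a c * gcd a c"
    by (simp only: prod_gcd_lcm_nat[of a c] ac_simps)
  also have "\<dots> \<le> F * (n + 3)"
    using \<open>b * lcm a c \<le> F\<close> \<open>gcd a c \<le> n + 3\<close> by (rule mult_mono) simp_all
  finally show ?thesis
    unfolding a_b_c_def F_def .
qed

lemma three_gcd_bounds_imp_less:
  fixes F X Y Z a b c :: nat
  assumes h1: "F\<^sup>2 < a\<^sup>2 * (X * F)" and h2: "(X * F)\<^sup>2 < b\<^sup>2 * (Y * X * F)"
    and h3: "(Y * X * F)\<^sup>2 < c\<^sup>2 * (Z * Y * X * F)" and h4: "a * b * c \<le> Y * X * F * Z"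
  shows "F < Z ^ 3 * Y\<^sup>2 * X"
proof -
  have pos: "0 < F ^ 5 * X ^ 4 * Y\<^sup>2"
    using h1 h2 h3 by (auto simp: power2_eq_square)
  have r1: "F\<^sup>2 * (X * F)\<^sup>2 < (a\<^sup>2 * (X * F)) * (b\<^sup>2 * (Y * X * F))"
    by (rule mult_strict_mono[OF h1 h2 le_less_trans[OF zero_le h1]]) simp
  have "F\<^sup>2 * (X * F)\<^sup>2 * (Y * X * F)\<^sup>2
      < (a\<^sup>2 * (X * F)) * (b\<^sup>2 * (Y * X * F)) * (c\<^sup>2 * (Z * Y * X * F))"
    by (rule mult_strict_mono[OF r1 h3 le_less_trans[OF zero_le r1]]) simp
  also have "\<dots> = (a * b * c)\<^sup>2 * (X * F * (Y * X * F) * (Z * Y * X * F))"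
    by (simp add: algebra_simps power_mult_distrib)
  also have "\<dots> \<le> (Y * X * F * Z)\<^sup>2 * (X * F * (Y * X * F) * (Z * Y * X * F))"
    using h4 by (intro mult_right_mono power_mono) auto
  finally have "(F ^ 5 * X ^ 4 * Y\<^sup>2) * F < (F ^ 5 * X ^ 4 * Y\<^sup>2) * (Z ^ 3 * Y\<^sup>2 * X)"
    by (simp add: algebra_simps power_mult_distrib power2_eq_square power3_eq_cube eval_nat_numeral)
  then show ?thesis
    using pos by simp
qed

lemma poly_le_fact: "10 \<le> n \<Longrightarrow> (n + 3) ^ 3 * (n + 2)\<^sup>2 * (n + 1) \<le> fact n"
proof (induction n rule: dec_induct)
  case base
  then show ?case
    by (simp add: fact_numeral)
next
  case (step n)
  have "(n + 4) ^ 3 \<le> (n + 1)\<^sup>2 * (n + 3) * (n + 2)"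
  proof -
    obtain k where "n = k + 10"
      using step(1) by (metis add.commute le_iff_add)
    then show ?thesis
      by (simp add: power2_eq_square power3_eq_cube algebra_simps)
  qed
  have "Suc n + 3 = n + 4" "Suc n + 2 = n + 3" "Suc n + 1 = n + 2"
    by simp_all
  then have "(Suc n + 3) ^ 3 * (Suc n + 2)\<^sup>2 * (Suc n + 1) = (n + 4) ^ 3 * ((n + 3)\<^sup>2 * (n + 2))"
    by (simp only: mult.assoc)
  also have "\<dots> \<le> ((n + 1)\<^sup>2 * (n + 3) * (n + 2)) * ((n + 3)\<^sup>2 * (n + 2))"
    using \<open>(n + 4) ^ 3 \<le> _\<close> by (rule mult_right_mono) simp
  also have "\<dots> = (n + 1) * ((n + 3) ^ 3 * (n + 2)\<^sup>2 * (n + 1))"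
    by (simp only: power2_eq_square power3_eq_cube mult_ac)
  also have "\<dots> \<le> (n + 1) * fact n"
    by (rule mult_left_mono[OF step(3)]) simp
  finally show ?case
    by simp
qed

lemma not_three_consecutive_convergents_ge_10:
  assumes "10 \<le> n"
    and "is_convergent_of (exp 1) (e_partial n)"
    and "is_convergent_of (exp 1) (e_partial (Suc n))"
    and "is_convergent_of (exp 1) (e_partial (Suc (Suc n)))"
  shows False
proof -
  have "fact n < (n + 3) ^ 3 * (n + 2)\<^sup>2 * (n + 1)"
  proof (rule three_gcd_bounds_imp_less)
    show "(fact n)\<^sup>2 < (e_partial_gcd n)\<^sup>2 * ((n + 1) * fact n)"
      using e_partial_convergent_imp_fact_sq_less[OF assms(2)] by simp
    show "((n + 1) * fact n)\<^sup>2 < (e_partial_gcd (Suc n))\<^sup>2 * ((n + 2) * (n + 1) * fact n)"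
      using e_partial_convergent_imp_fact_sq_less[OF assms(3)] by (simp add: algebra_simps)
    show "((n + 2) * (n + 1) * fact n)\<^sup>2
        < (e_partial_gcd (Suc (Suc n)))\<^sup>2 * ((n + 3) * (n + 2) * (n + 1) * fact n)"
      using e_partial_convergent_imp_fact_sq_less[OF assms(4)] by (simp add: algebra_simps)
    show "e_partial_gcd n * e_partial_gcd (Suc n) * e_partial_gcd (Suc (Suc n))
        \<le> (n + 2) * (n + 1) * fact n * (n + 3)"
      using e_partial_gcd_prod_le[of n] by (simp add: algebra_simps)
  qed
  then show False
    using poly_le_fact[OF assms(1)] by simp
qed

section \<open>Small indices\<close>

lemma exp_1_cf_start:
  "cf_digit (exp 1) 0 = 2" "cf_digit (cf_rem (exp 1) 1) 0 = 1" "2 < cf_rem (cf_rem (exp 1) 1) 1"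
proof -
  define y where "y = cf_rem (exp 1) 1"
  define z where "z = cf_rem y 1"
  have "8 / 3 < (exp 1 :: real)" "exp 1 < (11 / 4 :: real)"
    by (fact exp_1_bounds)+
  then show a0: "cf_digit (exp 1) 0 = 2"
    by (simp add: cf_digit_def floor_eq_iff)
  then have y: "y = 1 / (exp 1 - 2)"
    by (simp add: y_def cf_digit_def)
  have "0 < exp 1 - (2 :: real)" "4 * (exp 1 - 2) < (3 :: real)" "2 < 3 * (exp 1 - (2 :: real))"
    using exp_1_bounds by simp_all
  then have "4 / 3 < y" "y < 3 / 2"
    unfolding y by (simp_all add: field_simps)
  then show a1: "cf_digit (cf_rem (exp 1) 1) 0 = 1"
    unfolding y_def[symmetric] cf_digit_def by (simp add: floor_eq_iff)
  then have z: "z = 1 / (y - 1)"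
    by (simp add: z_def y_def cf_digit_def)
  have "0 < y - 1" "2 * (y - 1) < 1"
    using \<open>y < 3 / 2\<close> \<open>4 / 3 < y\<close> by simp_all
  then show "2 < cf_rem (cf_rem (exp 1) 1) 1"
    unfolding y_def[symmetric] z_def[symmetric] z by (simp add: field_simps)
qed

text \<open>From the third convergent on, e = [2; 1, 2, ...] gives values at least 2 + 1/(1 + 1/2).\<close>

lemma convergent_exp_1_Suc_Suc_ge: "8 / 3 \<le> convergent (exp 1) (Suc (Suc i))"
proof -
  define y where "y = cf_rem (exp 1) 1"
  define z where "z = cf_rem y 1"
  have "2 \<le> real_of_int (cf_digit z 0)"
    using exp_1_cf_start(3) unfolding y_def[symmetric] z_def[symmetric]
    by (simp add: cf_digit_def le_floor_iff)
  moreover have "z \<notin> \<rat>"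
    unfolding z_def y_def by (intro cf_rem_1_notin_Rats exp_1_notin_Rats)
  ultimately have "2 \<le> convergent z i"
    using cf_digit_0_le_convergent[of z i] by linarith
  then have "0 < 1 / convergent z i" "1 / convergent z i \<le> 1 / 2"
    by (simp_all add: field_simps)
  moreover have "convergent y (Suc i) = 1 + 1 / convergent z i"
    using exp_1_cf_start(2) unfolding y_def[symmetric]
    by (simp only: convergent_Suc z_def[symmetric] of_int_1)
  ultimately have "0 < convergent y (Suc i)" "convergent y (Suc i) \<le> 3 / 2"
    by linarith+
  then have "2 / 3 \<le> 1 / convergent y (Suc i)"
    by (simp add: field_simps)
  moreover have "convergent (exp 1) (Suc (Suc i)) = 2 + 1 / convergent y (Suc i)"
    by (simp only: convergent_Suc exp_1_cf_start(1) y_def[symmetric] of_int_numeral)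
  ultimately show ?thesis
    by linarith
qed

lemma not_convergent_exp_1_5_div_2: "\<not> is_convergent_of (exp 1) (5 / 2)"
proof
  assume "is_convergent_of (exp 1) (5 / 2)"
  then obtain k where k: "convergent (exp 1) k = 5 / 2"
    unfolding is_convergent_of_def by auto
  consider "k = 0" | "k = 1" | i where "k = Suc (Suc i)"
    by (metis One_nat_def not0_implies_Suc)
  then show False
  proof cases
    case 1
    then show False
      using k exp_1_cf_start(1) by (simp add: convergent_0)
  next
    case 2
    have "convergent (exp 1) 1 = 3"
      using exp_1_cf_start(1,2)
      by (simp only: One_nat_def convergent_Suc convergent_0)
    then show False
      using k 2 by simp
  next
    case 3
    then show False
      using k convergent_exp_1_Suc_Suc_ge[of i] by simp
  qed
qed

lemma e_partial_num_numeral: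
  "e_partial_num (numeral k) = numeral k * e_partial_num (pred_numeral k) + 1"
  by (simp only: numeral_eq_Suc e_partial_num.simps)

text \<open>For m = 2 the gcd criterion is satisfied (5/2 is a good approximation of e), so the
  continued fraction of e has to be used directly.\<close>

lemma e_partial_even_not_convergent:
  assumes "even m" "m \<le> 10"
  shows "\<not> is_convergent_of (exp 1) (e_partial m)"
proof
  assume conv: "is_convergent_of (exp 1) (e_partial m)"
  have "m = 0 \<or> m = 2 \<or> m = 4 \<or> m = 6 \<or> m = 8 \<or> m = 10"
    using assms by presburger
  then have "m \<in> {0, 4, 6, 8, 10} \<or> m = 2"
    by auto
  then show False
  proof
    assume "m \<in> {0, 4, 6, 8, 10}"
    moreover have "(fact m)\<^sup>2 < (e_partial_gcd m)\<^sup>2 * fact (Suc m)"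
      using conv by (rule e_partial_convergent_imp_fact_sq_less)
    ultimately show False
      by (auto simp: e_partial_gcd_def e_partial_num_numeral fact_numeral gcd_non_0_nat)
  next
    assume "m = 2"
    then have "e_partial m = 5 / 2"
      by (simp add: e_partial_def numeral_2_eq_2)
    then show False
      using conv not_convergent_exp_1_5_div_2 by (simp only:)
  qed
qed

theorem theorem3p1:
  fixes n :: nat
  shows "\<not> (is_convergent_of (exp 1) (e_partial n) \<and>
            is_convergent_of (exp 1) (e_partial (n + 1)) \<and>
            is_convergent_of (exp 1) (e_partial (n + 2)))"
proof
  assume H: "is_convergent_of (exp 1) (e_partial n) \<and>
            is_convergent_of (exp 1) (e_partial (n + 1)) \<and>
            is_convergent_of (exp 1) (e_partial (n + 2))"
  show False
  proof (cases "10 \<le> n")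
    case True
    then show False
      using not_three_consecutive_convergents_ge_10 H by auto
  next
    case False
    define m where "m = n + n mod 2"
    have "even m" "m \<le> 10" "m = n \<or> m = n + 1"
      unfolding m_def using False by presburger+
    then show False
      using H e_partial_even_not_convergent by auto
  qed
qed

end
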